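(* Let $f:\mathbb{R}^d\times\mathbb{R}^d\to\mathbb{R}^d$ be Borel measurable, $\phi:\mathbb{R}^d\to[0,\infty)$ a probability density with respect to Lebesgue measure, and $K(x,A)=\int_{\mathbb{R}^d}1_A(f(x,z))\phi(z)dz$. Let $R,M>0$ and $y_0\in\mathbb{R}^d$, and write $f_x=f(x,\cdot)$. Assume (i) there exists $L_f\ge0$ such that $f_x$ is $L_f$-Lipschitz for every $x\in B(0,R)$; (ii) there exists $\tilde M>0$ such that $B(y_0,M)\subset f_x(B(0,\tilde M))$ for all $x\in B(0,R)$; (iii) $\phi$ is lower semicontinuous and positive on $\mathbb{R}^d$. Then for all $x\in B(0,R)$ and all Borel $A\subset\mathbb{R}^d$, $$K(x,A)\ge L_f^{-d}\inf_{z\in B(0,\tilde M)}\{\phi(z)\}\,\mathrm{Leb}(A\cap B(y_0,M)).$$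
   Context: $B(x,r)$ denotes the Euclidean ball centered at $x$ of radius $r$, and $\mathrm{Leb}$ the Lebesgue measure on $\mathbb{R}^d$. *)

theory Defs
  imports "HOL-Analysis.Analysis"
begin

definition lsc :: "('a::topological_space \<Rightarrow> real) \<Rightarrow> bool" where
  "lsc g \<longleftrightarrow> (\<forall>x t. t < g x \<longrightarrow> (\<forall>\<^sub>F y in nhds x. t < g y))"

definition kernelK :: "('a::euclidean_space \<Rightarrow> 'a \<Rightarrow> 'a) \<Rightarrow> ('a \<Rightarrow> real) \<Rightarrow> 'a \<Rightarrow> 'a set \<Rightarrow> real" where
  "kernelK f \<phi> x A = (LINT z|lborel. indicator A (f x z) * \<phi> z)"

end

theory Submission
  imports Defs
begin

text \<open>On \<open>B(0,Mt)\<close> the density is at least its infimum \<open>m\<close>, so \<open>K(x,A)\<close> dominates \<open>m\<close> times the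
  Lebesgue measure of \<open>B(0,Mt) \<inter> f\<^sub>x\<^sup>-\<^sup>1(A)\<close>. This set is mapped by \<open>f\<^sub>x\<close> onto a superset of
  \<open>A \<inter> B(y0,M)\<close>, and an \<open>L\<close>-Lipschitz map of \<open>\<real>\<^sup>d\<close> enlarges Lebesgue (outer) measure at most by the
  factor \<open>L\<^sup>d\<close>. The latter is proved with the Vitali covering theorem: cover the source set up to a
  null set by disjoint small balls inside an open set of almost the same measure; their images lie
  in the concentric balls of \<open>L\<close> times the radius, and the uncovered null set has a null image.\<close>

lemma emeasure_UN_countable_le:
  assumes sets[measurable]: "\<And>i. i \<in> I \<Longrightarrow> X i \<in> sets M" and I: "countable I"
  shows "emeasure M (\<Union>(X ` I)) \<le> (\<integral>\<^sup>+i. emeasure M (X i) \<partial>count_space I)"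
proof -
  have le: "indicator (\<Union>(X ` I)) x \<le> (\<integral>\<^sup>+i. indicator (X i) x \<partial>count_space I)" for x
  proof (cases "x \<in> \<Union>(X ` I)")
    case True
    then obtain j where j: "x \<in> X j" "j \<in> I" by auto
    have "(1::ennreal) = (\<integral>\<^sup>+i. indicator {j} i \<partial>count_space I)"
      using j by (simp add: nn_integral_indicator)
    also have "\<dots> \<le> (\<integral>\<^sup>+i. indicator (X i) x \<partial>count_space I)"
      by (rule nn_integral_mono) (use j in \<open>auto simp: indicator_def\<close>)
    finally show ?thesis using True by simp
  qed simp
  note sets.countable_UN'[unfolded subset_eq, measurable]
  have "emeasure M (\<Union>(X ` I)) = (\<integral>\<^sup>+x. indicator (\<Union>(X ` I)) x \<partial>M)"
    using I by simp
  also have "\<dots> \<le> (\<integral>\<^sup>+x. \<integral>\<^sup>+i. indicator (X i) x \<partial>count_space I \<partial>M)"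
    by (rule nn_integral_mono) (rule le)
  also have "\<dots> = (\<integral>\<^sup>+i. \<integral>\<^sup>+x. indicator (X i) x \<partial>M \<partial>count_space I)"
    using I by (simp add: nn_integral_count_space_nn_integral)
  also have "\<dots> = (\<integral>\<^sup>+i. emeasure M (X i) \<partial>count_space I)"
    by (simp cong: nn_integral_cong_simp)
  finally show ?thesis .
qed

lemma emeasure_lborel_ball_scale:
  fixes c d :: "'a::euclidean_space"
  assumes "r \<ge> 0" "L \<ge> 0"
  shows "emeasure lborel (ball d (L * r)) = ennreal (L ^ DIM('a)) * emeasure lborel (ball c r)"
proof -
  have "measure lborel (ball d (L * r)) = L ^ DIM('a) * measure lborel (ball c r)"
    using assms by (simp add: content_ball_conv_unit_ball[of "L * r"] content_ball_conv_unit_ball[of r]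
        power_mult_distrib)
  moreover have "emeasure lborel (ball a s) = ennreal (measure lborel (ball a s))" for a :: 'a and s
    using emeasure_lborel_ball_finite[of a s] by (simp add: emeasure_eq_ennreal_measure less_top)
  ultimately show ?thesis
    using assms by (simp add: ennreal_mult)
qed

lemma emeasure_lipschitz_image_disjoint_balls_le:
  fixes g :: "'a::euclidean_space \<Rightarrow> 'a" and a :: "'i \<Rightarrow> 'a"
  assumes L: "L > 0" and lip: "L-lipschitz_on UNIV g"
    and C: "countable C" and r: "\<And>i. i \<in> C \<Longrightarrow> 0 \<le> r i"
    and disj: "pairwise (\<lambda>i j. disjnt (ball (a i) (r i)) (ball (a j) (r j))) C"
    and N: "N \<in> null_sets lebesgue" and B: "B \<subseteq> g ` (\<Union>i\<in>C. ball (a i) (r i)) \<union> N"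
  shows "emeasure lebesgue B \<le> ennreal (L ^ DIM('a)) * emeasure lebesgue (\<Union>i\<in>C. ball (a i) (r i))"
proof -
  define X where "X = (\<Union>i\<in>C. ball (g (a i)) (L * r i))"
  have X_sets: "X \<in> sets borel"
    using C unfolding X_def by (intro sets.countable_UN') auto
  have "g ` (\<Union>i\<in>C. ball (a i) (r i)) \<subseteq> X"
  proof
    fix y assume "y \<in> g ` (\<Union>i\<in>C. ball (a i) (r i))"
    then obtain i z where i: "i \<in> C" "z \<in> ball (a i) (r i)" "y = g z"
      by blast
    have "dist (g (a i)) (g z) \<le> L * dist (a i) z"
      using lipschitz_onD[OF lip] by blast
    also have "\<dots> < L * r i"
      using i L by simp
    finally show "y \<in> X"
      using i by (auto simp: X_def)
  qed
  then have "emeasure lebesgue B \<le> emeasure lebesgue (X \<union> N)"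
    using B X_sets N by (intro emeasure_mono) auto
  also have "\<dots> = emeasure lborel X"
    using X_sets N by (simp add: emeasure_Un_null_set)
  also have "\<dots> \<le> (\<integral>\<^sup>+i. emeasure lborel (ball (g (a i)) (L * r i)) \<partial>count_space C)"
    unfolding X_def by (rule emeasure_UN_countable_le) (simp_all add: C)
  also have "\<dots> = (\<integral>\<^sup>+i. ennreal (L ^ DIM('a)) * emeasure lborel (ball (a i) (r i)) \<partial>count_space C)"
    using L r by (intro nn_integral_cong emeasure_lborel_ball_scale) auto
  also have "\<dots> = ennreal (L ^ DIM('a)) * emeasure lebesgue (\<Union>i\<in>C. ball (a i) (r i))"
    using C disj by (simp add: nn_integral_cmult emeasure_UN_countable disjoint_family_on_def
        pairwise_def disjnt_def)
  finally show ?thesis .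
qed

lemma emeasure_subset_lipschitz_image_le_open:
  fixes g :: "'a::euclidean_space \<Rightarrow> 'a"
  assumes L: "L > 0" and lip: "L-lipschitz_on UNIV g"
    and U: "open U" "E \<subseteq> U" and B: "B \<subseteq> g ` E"
  shows "emeasure lebesgue B \<le> ennreal (L ^ DIM('a)) * emeasure lebesgue U"
proof -
  define K where "K = {i :: 'a \<times> real. 0 < snd i \<and> ball (fst i) (snd i) \<subseteq> U}"
  have small_ball: "\<exists>i. i \<in> K \<and> x \<in> ball (fst i) (snd i) \<and> snd i < d"
    if x: "x \<in> E" and d: "0 < d" for x d
  proof -
    obtain r where r: "r > 0" "ball x r \<subseteq> U"
      using U x by (meson openE subsetD)
    have "ball x (min r d / 2) \<subseteq> ball x r"
      using r d by (intro subset_ball) simp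
    then show ?thesis
      using r d by (intro exI[of _ "(x, min r d / 2)"]) (auto simp: K_def)
  qed
  obtain C where C: "countable C" "C \<subseteq> K"
    and disj: "pairwise (\<lambda>i j. disjnt (ball (fst i) (snd i)) (ball (fst j) (snd j))) C"
    and neg: "negligible (E - (\<Union>i\<in>C. ball (fst i) (snd i)))"
    by (rule Vitali_covering_theorem_balls[of E K fst snd, OF small_ball])
  define D where "D = (\<Union>i\<in>C. ball (fst i) (snd i))"
  have "g ` (E - D) \<in> null_sets lebesgue"
    unfolding negligible_iff_null_sets[symmetric]
  proof (rule negligible_locally_Lipschitz_image[OF order_refl neg[folded D_def]])
    show "\<exists>T B. open T \<and> x \<in> T \<and> (\<forall>y \<in> (E - D) \<inter> T. norm (g y - g x) \<le> B * norm (y - x))"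
      for x
      using lipschitz_on_normD[OF lip] by (intro exI[of _ UNIV] exI[of _ L]) simp
  qed
  moreover have "B \<subseteq> g ` D \<union> g ` (E - D)"
    using B by blast
  ultimately have "emeasure lebesgue B \<le> ennreal (L ^ DIM('a)) * emeasure lebesgue D"
    unfolding D_def using L lip C disj K_def
    by (intro emeasure_lipschitz_image_disjoint_balls_le) auto
  also have "\<dots> \<le> ennreal (L ^ DIM('a)) * emeasure lebesgue U"
  proof (intro mult_left_mono)
    have "D \<subseteq> U"
      using C(2) by (auto simp: D_def K_def)
    then show "emeasure lebesgue D \<le> emeasure lebesgue U"
      by (rule emeasure_mono) (use U(1) in auto)
  qed simp
  finally show ?thesis .
qed

lemma emeasure_subset_lipschitz_image_le:
  fixes g :: "'a::euclidean_space \<Rightarrow> 'a"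
  assumes L: "L > 0" and lip: "L-lipschitz_on UNIV g"
    and E: "E \<in> sets lebesgue" and B: "B \<subseteq> g ` E"
  shows "emeasure lebesgue B \<le> ennreal (L ^ DIM('a)) * emeasure lebesgue E"
proof (rule ennreal_le_epsilon)
  fix e :: real assume e: "0 < e"
  have Ln: "L ^ DIM('a) > 0"
    using L by simp
  obtain U where U: "open U" "E \<subseteq> U" "U - E \<in> lmeasurable"
    and small: "emeasure lebesgue (U - E) < ennreal (e / L ^ DIM('a))"
    using sets_lebesgue_outer_open[OF E, of "e / L ^ DIM('a)"] e Ln by auto
  have "emeasure lebesgue U \<le> emeasure lebesgue E + emeasure lebesgue (U - E)"
    using emeasure_subadditive[OF E fmeasurableD[OF U(3)]] U(2) by (simp add: Un_absorb1)
  also have "\<dots> \<le> emeasure lebesgue E + ennreal (e / L ^ DIM('a))"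
    using small by (intro add_left_mono) simp
  finally have U_le: "emeasure lebesgue U \<le> emeasure lebesgue E + ennreal (e / L ^ DIM('a))" .
  have "emeasure lebesgue B \<le> ennreal (L ^ DIM('a)) * emeasure lebesgue U"
    by (rule emeasure_subset_lipschitz_image_le_open[OF L lip U(1,2) B])
  also have "\<dots> \<le> ennreal (L ^ DIM('a)) * emeasure lebesgue E
      + ennreal (L ^ DIM('a)) * ennreal (e / L ^ DIM('a))"
    using U_le by (simp add: mult_left_mono flip: distrib_left)
  also have "ennreal (L ^ DIM('a)) * ennreal (e / L ^ DIM('a)) = ennreal e"
    using L e by (simp flip: ennreal_mult)
  finally show "emeasure lebesgue B \<le> ennreal (L ^ DIM('a)) * emeasure lebesgue E + ennreal e" .
qed

lemma measure_subset_lipschitz_image_le: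
  fixes g :: "'a::euclidean_space \<Rightarrow> 'a"
  assumes L: "L > 0" and lip: "L-lipschitz_on UNIV g"
    and E: "E \<in> lmeasurable" and B: "B \<in> sets lebesgue" "B \<subseteq> g ` E"
  shows "measure lebesgue B \<le> L ^ DIM('a) * measure lebesgue E"
proof -
  have "emeasure lebesgue B \<le> ennreal (L ^ DIM('a) * measure lebesgue E)"
    using emeasure_subset_lipschitz_image_le[OF L lip fmeasurableD[OF E] B(2)] E L
    by (simp add: emeasure_eq_measure2 ennreal_mult)
  then show ?thesis
    using L by (simp add: measure_def enn2real_leI)
qed

lemma kernelK_ge_measure_preimage:
  fixes f :: "'a::euclidean_space \<Rightarrow> 'a \<Rightarrow> 'a"
  assumes f_x_meas: "f x \<in> borel_measurable borel"
    and phi_nonneg: "\<And>z. \<phi> z \<ge> 0" and phi_int: "integrable lborel \<phi>"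
    and A: "A \<in> sets borel" and S: "S \<in> sets borel" "emeasure lborel S < \<infinity>"
    and phi_ge: "\<And>z. z \<in> S \<Longrightarrow> m \<le> \<phi> z"
  shows "m * measure lborel (S \<inter> f x -` A) \<le> kernelK f \<phi> x A"
proof -
  define E where "E = S \<inter> f x -` A"
  have E_sets: "E \<in> sets borel"
    unfolding E_def using measurable_sets_borel[OF f_x_meas A] S(1) by auto
  have "emeasure lborel E < \<infinity>"
    using S emeasure_mono[of E S lborel] by (auto simp: E_def)
  then have "m * measure lborel E = (LINT z|lborel. indicator E z * m)"
    using E_sets by simp
  also have "\<dots> \<le> (LINT z|lborel. indicator A (f x z) * \<phi> z)"
  proof (rule integral_mono)
    show "integrable lborel (\<lambda>z. indicator E z * m)"
      using E_sets \<open>emeasure lborel E < \<infinity>\<close> by simp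
    show "integrable lborel (\<lambda>z. indicator A (f x z) * \<phi> z)"
      using phi_int A f_x_meas
      by (intro Bochner_Integration.integrable_bound[OF phi_int]) (auto simp: phi_nonneg indicator_def)
    show "indicator E z * m \<le> indicator A (f x z) * \<phi> z" for z
      using phi_ge phi_nonneg by (auto simp: E_def indicator_def)
  qed
  finally show ?thesis
    by (simp add: E_def kernelK_def)
qed

theorem theorem10:
  fixes f :: "'a::euclidean_space \<Rightarrow> 'a \<Rightarrow> 'a"
    and \<phi> :: "'a \<Rightarrow> real"
    and R M Mt Lf :: real and y0 :: 'a
  assumes f_meas: "(\<lambda>(x, z). f x z) \<in> borel_measurable borel"
    and phi_nonneg: "\<And>z. \<phi> z \<ge> 0"
    and phi_int: "integrable lborel \<phi>"
    and phi_one: "(LINT z|lborel. \<phi> z) = 1"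
    and R_pos: "R > 0" and M_pos: "M > 0"
    and Lf_nonneg: "Lf \<ge> 0"
    and lip: "\<And>x. x \<in> ball 0 R \<Longrightarrow> Lf-lipschitz_on UNIV (f x)"
    and Mt_pos: "Mt > 0"
    and cover: "\<And>x. x \<in> ball 0 R \<Longrightarrow> ball y0 M \<subseteq> f x ` ball 0 Mt"
    and phi_lsc: "lsc \<phi>"
    and phi_pos: "\<And>z. \<phi> z > 0"
  shows "\<forall>x \<in> ball 0 R. \<forall>A \<in> sets borel.
           kernelK f \<phi> x A \<ge>
             (1 / Lf ^ DIM('a)) * (INF z \<in> ball 0 Mt. \<phi> z) * measure lborel (A \<inter> ball y0 M)"
proof (intro ballI)
  fix x :: 'a and A :: "'a set" assume x: "x \<in> ball 0 R" and A: "A \<in> sets borel"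
  define m where "m = (INF z \<in> ball 0 Mt. \<phi> z)"
  define E where "E = ball 0 Mt \<inter> f x -` A"
  have m_le: "m \<le> \<phi> z" if "z \<in> ball 0 Mt" for z
    unfolding m_def using that phi_nonneg by (intro cINF_lower bdd_belowI[of _ 0]) auto
  have m_nonneg: "0 \<le> m"
    unfolding m_def using Mt_pos phi_nonneg by (intro cINF_greatest) auto
  have f_x_meas: "f x \<in> borel_measurable borel"
    using lip[OF x] by (intro borel_measurable_continuous_onI lipschitz_on_continuous_on)
  have kernel_ge: "m * measure lborel E \<le> kernelK f \<phi> x A"
    unfolding E_def using f_x_meas phi_nonneg phi_int A m_le emeasure_lborel_ball_finite
    by (intro kernelK_ge_measure_preimage) auto
  show "(1 / Lf ^ DIM('a)) * m * measure lborel (A \<inter> ball y0 M) \<le> kernelK f \<phi> x A"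
  proof (cases "Lf = 0")
    case True \<comment> \<open>the bound degenerates to \<open>0\<close> since \<open>1 / 0 = 0\<close>\<close>
    have "0 \<le> kernelK f \<phi> x A"
      using order_trans[OF mult_nonneg_nonneg[OF m_nonneg measure_nonneg] kernel_ge] .
    then show ?thesis
      using True by (simp add: zero_power)
  next
    case False
    then have Lf: "Lf > 0"
      using Lf_nonneg by simp
    have E_borel: "E \<in> sets borel"
      unfolding E_def using measurable_sets_borel[OF f_x_meas A] by auto
    then have "E \<in> lmeasurable"
      by (intro bounded_set_imp_lmeasurable) (auto simp: E_def bounded_Int)
    moreover have "A \<inter> ball y0 M \<subseteq> f x ` E"
      using cover[OF x] by (force simp: E_def)
    ultimately have "measure lborel (A \<inter> ball y0 M) \<le> Lf ^ DIM('a) * measure lborel E"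
      using measure_subset_lipschitz_image_le[OF Lf lip[OF x], of E "A \<inter> ball y0 M"] A E_borel
      by simp
    then have "(1 / Lf ^ DIM('a)) * m * measure lborel (A \<inter> ball y0 M) \<le> m * measure lborel E"
      using Lf m_nonneg by (simp add: field_simps mult_left_mono)
    then show ?thesis
      using kernel_ge by linarith
  qed
qed

end
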